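(* Let $G$ be a finite group. On the set $\widetilde{\mathcal{PD}}(G)$ define $(c^{(1)},\kappa_R^{(1)},\kappa_L^{(1)},b^{(1)},a^{(1)})\sim(c^{(2)},\kappa_R^{(2)},\kappa_L^{(2)},b^{(2)},a^{(2)})$ if (i) $a^{(1)}(g)=a^{(2)}(g)=:a(g)$ for all $g\in G$, and (ii) there exist $m\in C^1(G,\mathbb Z_2\oplus\mathbb Z_2)$ and $\sigma\in C^2(G,\mathrm U(1)\oplus\mathrm U(1))$ such that for all $g,h,k\in G$: $\kappa_R^{(2)}(g,h)=d^1_am(g,h)+\kappa_R^{(1)}(g,h)$, $\kappa_L^{(2)}(g,h)=d^1_ab^{(2)}(g,h)-d^1_ab^{(1)}(g,h)-d^1_am(g,h)+\kappa_L^{(1)}(g,h)$, $c^{(2)}(g,h,k)=(-1)^{\kappa_L^{(1)}(g,h)\cdot m^{a(gh)}(k)}(-1)^{(b^{(2)}(g)-b^{(1)}(g)-m(g))\cdot(\kappa_R^{(2)})^{a(g)}(h,k)}\,d^2_a\sigma(g,h,k)\,c^{(1)}(g,h,k)$. Then $\sim$ is an equivalence relation on $\widetilde{\mathcal{PD}}(G)$.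
   Context: $\mathbb Z_2=\{0,1\}$ (additive group), $\mathrm U(1)$ multiplicative. For $A\in\{\mathbb Z_2,\mathrm U(1)\}$, $A\oplus A$ has componentwise group operation and the $\mathbb Z_2$-action $x^{a}=\begin{pmatrix}0&1\\1&0\end{pmatrix}^ax$ (swap components when $a=1$). $C^n(G,A\oplus A)$ denotes all maps $G^n\to A\oplus A$; $H^1(G,\mathbb Z_2)$ denotes group homomorphisms $G\to\mathbb Z_2$. For $a\in H^1(G,\mathbb Z_2)$: on $\mathbb Z_2\oplus\mathbb Z_2$-valued cochains, $d^1_ax(g,h)=x^{a(g)}(h)+x(g)-x(gh)$, $d^2_ay(g,h,k)=y^{a(g)}(h,k)+y(g,hk)-y(gh,k)-y(g,h)$; on $\mathrm U(1)\oplus\mathrm U(1)$-valued cochains (multiplicatively), $d^2_ay(g,h,k)=\frac{y^{a(g)}(h,k)\,y(g,hk)}{y(gh,k)\,y(g,h)}$, $d^3_az(g,h,k,f)=\frac{z^{a(g)}(h,k,f)\,z(g,hk,f)\,z(g,h,k)}{z(gh,k,f)\,z(g,h,kf)}$. For $x,y\in\mathbb Z_2\oplus\mathbb Z_2$, $x\cdot y:=(x_+y_+,x_-y_-)$ (componentwise ring product of $\mathbb Z_2$) and $(-1)^x:=((-1)^{x_+},(-1)^{x_-})\in\mathrm U(1)\oplus\mathrm U(1)$. $\widetilde{\mathcal{PD}}(G)$ is the set of pentads $(c,\kappa_R,\kappa_L,b,a)$ with $c\in C^3(G,\mathrm U(1)\oplus\mathrm U(1))$, $\kappa_R,\kappa_L\in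 C^2(G,\mathbb Z_2\oplus\mathbb Z_2)$, $b\in C^1(G,\mathbb Z_2\oplus\mathbb Z_2)$, $a\in H^1(G,\mathbb Z_2)$ such that $d^1_ab=\kappa_L+\kappa_R$, $d^2_a\kappa_R=0$, $d^2_a\kappa_L=0$, and $d^3_ac(g,h,k,f)=(-1)^{\kappa_L(g,h)\cdot\kappa_R^{a(gh)}(k,f)}$ for all $g,h,k,f\in G$. *)

theory Defs
  imports Complex_Main "HOL-Library.Z2" "HOL-Algebra.Group"
begin

type_synonym z2z2 = "bit \<times> bit"
type_synonym u1u1 = "complex \<times> complex"  (* U(1) \<oplus> U(1), values constrained to norm 1 *)

text \<open>Z_2 action on A \<oplus> A: swap components when a = 1.\<close>
definition swp :: "bit \<Rightarrow> 'x \<times> 'x \<Rightarrow> 'x \<times> 'x" where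
  "swp a x = (if a = 1 then (snd x, fst x) else x)"

definition zadd :: "z2z2 \<Rightarrow> z2z2 \<Rightarrow> z2z2" where
  "zadd x y = (fst x + fst y, snd x + snd y)"
definition zsub :: "z2z2 \<Rightarrow> z2z2 \<Rightarrow> z2z2" where
  "zsub x y = (fst x - fst y, snd x - snd y)"
definition zdot :: "z2z2 \<Rightarrow> z2z2 \<Rightarrow> z2z2" where
  "zdot x y = (fst x * fst y, snd x * snd y)"

definition umul :: "u1u1 \<Rightarrow> u1u1 \<Rightarrow> u1u1" where
  "umul p q = (fst p * fst q, snd p * snd q)"
definition udiv :: "u1u1 \<Rightarrow> u1u1 \<Rightarrow> u1u1" where
  "udiv p q = (fst p / fst q, snd p / snd q)"

definition neg1 :: "bit \<Rightarrow> complex" where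
  "neg1 x = (if x = 1 then -1 else 1)"

definition sgnp :: "z2z2 \<Rightarrow> u1u1" where
  "sgnp x = (neg1 (fst x), neg1 (snd x))"

definition is_u1 :: "u1u1 \<Rightarrow> bool" where
  "is_u1 p \<longleftrightarrow> norm (fst p) = 1 \<and> norm (snd p) = 1"

text \<open>Cochains G^n \<rightarrow> A \<oplus> A are curried HOL functions; only values on the carrier matter.\<close>

definition H1 :: "('g, 'b) monoid_scheme \<Rightarrow> ('g \<Rightarrow> bit) set" where
  "H1 G = {a. \<forall>g\<in>carrier G. \<forall>h\<in>carrier G. a (g \<otimes>\<^bsub>G\<^esub> h) = a g + a h}"

definition d1z :: "('g, 'b) monoid_scheme \<Rightarrow> ('g \<Rightarrow> bit) \<Rightarrow> ('g \<Rightarrow> z2z2) \<Rightarrow> 'g \<Rightarrow> 'g \<Rightarrow> z2z2" where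
  "d1z G a x g h = zsub (zadd (swp (a g) (x h)) (x g)) (x (g \<otimes>\<^bsub>G\<^esub> h))"

definition d2z :: "('g, 'b) monoid_scheme \<Rightarrow> ('g \<Rightarrow> bit) \<Rightarrow> ('g \<Rightarrow> 'g \<Rightarrow> z2z2) \<Rightarrow> 'g \<Rightarrow> 'g \<Rightarrow> 'g \<Rightarrow> z2z2" where
  "d2z G a y g h k = zsub (zsub (zadd (swp (a g) (y h k)) (y g (h \<otimes>\<^bsub>G\<^esub> k)))
                              (y (g \<otimes>\<^bsub>G\<^esub> h) k)) (y g h)"

definition d2u :: "('g, 'b) monoid_scheme \<Rightarrow> ('g \<Rightarrow> bit) \<Rightarrow> ('g \<Rightarrow> 'g \<Rightarrow> u1u1) \<Rightarrow> 'g \<Rightarrow> 'g \<Rightarrow> 'g \<Rightarrow> u1u1" where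
  "d2u G a y g h k = udiv (umul (swp (a g) (y h k)) (y g (h \<otimes>\<^bsub>G\<^esub> k)))
                          (umul (y (g \<otimes>\<^bsub>G\<^esub> h) k) (y g h))"

definition d3u :: "('g, 'b) monoid_scheme \<Rightarrow> ('g \<Rightarrow> bit) \<Rightarrow> ('g \<Rightarrow> 'g \<Rightarrow> 'g \<Rightarrow> u1u1) \<Rightarrow> 'g \<Rightarrow> 'g \<Rightarrow> 'g \<Rightarrow> 'g \<Rightarrow> u1u1" where
  "d3u G a z g h k f = udiv (umul (umul (swp (a g) (z h k f)) (z g (h \<otimes>\<^bsub>G\<^esub> k) f)) (z g h k))
                            (umul (z (g \<otimes>\<^bsub>G\<^esub> h) k f) (z g h (k \<otimes>\<^bsub>G\<^esub> f)))"

type_synonym 'g pentad =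
  "('g \<Rightarrow> 'g \<Rightarrow> 'g \<Rightarrow> u1u1) \<times> ('g \<Rightarrow> 'g \<Rightarrow> z2z2) \<times> ('g \<Rightarrow> 'g \<Rightarrow> z2z2) \<times> ('g \<Rightarrow> z2z2) \<times> ('g \<Rightarrow> bit)"

definition PDt :: "('g, 'b) monoid_scheme \<Rightarrow> 'g pentad set" where
  "PDt G = {(c, kR, kL, b, a).
     (\<forall>g\<in>carrier G. \<forall>h\<in>carrier G. \<forall>k\<in>carrier G. is_u1 (c g h k)) \<and>
     a \<in> H1 G \<and>
     (\<forall>g\<in>carrier G. \<forall>h\<in>carrier G. d1z G a b g h = zadd (kL g h) (kR g h)) \<and>
     (\<forall>g\<in>carrier G. \<forall>h\<in>carrier G. \<forall>k\<in>carrier G. d2z G a kR g h k = (0, 0)) \<and>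
     (\<forall>g\<in>carrier G. \<forall>h\<in>carrier G. \<forall>k\<in>carrier G. d2z G a kL g h k = (0, 0)) \<and>
     (\<forall>g\<in>carrier G. \<forall>h\<in>carrier G. \<forall>k\<in>carrier G. \<forall>f\<in>carrier G.
        d3u G a c g h k f = sgnp (zdot (kL g h) (swp (a (g \<otimes>\<^bsub>G\<^esub> h)) (kR k f))))}"

definition pd_rel :: "('g, 'b) monoid_scheme \<Rightarrow> ('g pentad \<times> 'g pentad) set" where
  "pd_rel G = {((c1, kR1, kL1, b1, a1), (c2, kR2, kL2, b2, a2)).
     (c1, kR1, kL1, b1, a1) \<in> PDt G \<and> (c2, kR2, kL2, b2, a2) \<in> PDt G \<and>
     (\<forall>g\<in>carrier G. a1 g = a2 g) \<and>
     (\<exists>(m :: 'g \<Rightarrow> z2z2) (\<sigma> :: 'g \<Rightarrow> 'g \<Rightarrow> u1u1).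
        (\<forall>g\<in>carrier G. \<forall>h\<in>carrier G. is_u1 (\<sigma> g h)) \<and>
        (\<forall>g\<in>carrier G. \<forall>h\<in>carrier G. \<forall>k\<in>carrier G.
           kR2 g h = zadd (d1z G a1 m g h) (kR1 g h) \<and>
           kL2 g h = zadd (zsub (zsub (d1z G a1 b2 g h) (d1z G a1 b1 g h)) (d1z G a1 m g h)) (kL1 g h) \<and>
           c2 g h k = umul (umul (umul
                 (sgnp (zdot (kL1 g h) (swp (a1 (g \<otimes>\<^bsub>G\<^esub> h)) (m k))))
                 (sgnp (zdot (zsub (zsub (b2 g) (b1 g)) (m g)) (swp (a1 g) (kR2 h k)))))
                 (d2u G a1 \<sigma> g h k)) (c1 g h k)))}"

end

theory Submission
  imports Defs
begin

(* Put n = b' - b - m. Then (c, kR, kL, b, a) ~ (c', kR', kL', b', a) says that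
   kR' = kR + d m, kL' = kL + d n and c' = (-1)^(kL cup m + n cup kR') d sigma c,
   so b and b' enter only through n. Reflexivity takes m = n = 0 and sigma = 1.
   For symmetry (with the same m, n) and transitivity (with m + m', n + n') the
   sign exponents differ from the required ones by d n cup m' + n cup d m', which
   by the Leibniz rule for the twisted cup product is the coboundary d (n cup m');
   it is absorbed by multiplying sigma with (-1)^(n cup m'). *)

lemma bit_add_self_left: "(x::bit) + (x + y) = y"
  by (cases x) simp_all

lemma zsub_eq_zadd: "zsub x y = zadd x y"
  by (simp add: zsub_def zadd_def)

lemma zadd_commute: "zadd x y = zadd y x"
  by (simp only: zadd_def add.commute)

lemma zadd_assoc: "zadd (zadd x y) z = zadd x (zadd y z)"
  by (simp only: zadd_def prod.sel add.assoc)

lemma zadd_left_commute: "zadd x (zadd y z) = zadd y (zadd x z)"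
  by (simp only: zadd_def prod.sel add.left_commute)

lemma zadd_self: "zadd x x = (0, 0)"
  by (simp add: zadd_def)

lemma zadd_self_left: "zadd x (zadd x y) = y"
  by (simp only: zadd_def prod.sel bit_add_self_left prod.collapse)

lemma zadd_zero_left: "zadd (0, 0) x = x"
  by (simp only: zadd_def prod.sel add_0_left prod.collapse)

lemma zadd_zero_right: "zadd x (0, 0) = x"
  by (simp only: zadd_def prod.sel add_0_right prod.collapse)

lemma zdot_commute: "zdot x y = zdot y x"
  by (simp add: zdot_def mult.commute)

lemma zdot_zadd_left: "zdot (zadd x y) z = zadd (zdot x z) (zdot y z)"
  by (simp only: zdot_def zadd_def prod.sel distrib_right)

lemma zdot_zadd_right: "zdot x (zadd y z) = zadd (zdot x y) (zdot x z)"
  by (simp only: zdot_def zadd_def prod.sel distrib_left)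

lemma zdot_zero_left: "zdot (0, 0) x = (0, 0)"
  by (simp add: zdot_def)

lemma zdot_zero_right: "zdot x (0, 0) = (0, 0)"
  by (simp add: zdot_def)

lemma swp_zadd: "swp a (zadd x y) = zadd (swp a x) (swp a y)"
  by (simp add: swp_def zadd_def)

lemma swp_zdot: "swp a (zdot x y) = zdot (swp a x) (swp a y)"
  by (simp add: swp_def zdot_def)

lemma swp_swp: "swp a (swp b x) = swp (a + b) x"
  by (cases a; cases b) (simp_all add: swp_def)

lemmas z2z2_simps = zsub_eq_zadd zadd_assoc zadd_self zadd_self_left zadd_zero_right
  zdot_zadd_left zdot_zadd_right swp_zadd swp_zdot swp_swp

lemma d1z_zadd: "d1z G a (\<lambda>x. zadd (m x) (m' x)) g h = zadd (d1z G a m g h) (d1z G a m' g h)"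
  unfolding d1z_def by (simp add: z2z2_simps zadd_commute zadd_left_commute)

definition cup_1_1 :: "('g \<Rightarrow> bit) \<Rightarrow> ('g \<Rightarrow> z2z2) \<Rightarrow> ('g \<Rightarrow> z2z2) \<Rightarrow> 'g \<Rightarrow> 'g \<Rightarrow> z2z2" where
  "cup_1_1 a x y g h = zdot (x g) (swp (a g) (y h))"

definition cup_2_1 :: "('g, 'b) monoid_scheme \<Rightarrow> ('g \<Rightarrow> bit) \<Rightarrow> ('g \<Rightarrow> 'g \<Rightarrow> z2z2) \<Rightarrow> ('g \<Rightarrow> z2z2)
    \<Rightarrow> 'g \<Rightarrow> 'g \<Rightarrow> 'g \<Rightarrow> z2z2" where
  "cup_2_1 G a x y g h k = zdot (x g h) (swp (a (g \<otimes>\<^bsub>G\<^esub> h)) (y k))"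

definition cup_1_2 :: "('g \<Rightarrow> bit) \<Rightarrow> ('g \<Rightarrow> z2z2) \<Rightarrow> ('g \<Rightarrow> 'g \<Rightarrow> z2z2) \<Rightarrow> 'g \<Rightarrow> 'g \<Rightarrow> 'g \<Rightarrow> z2z2" where
  "cup_1_2 a x y g h k = zdot (x g) (swp (a g) (y h k))"

lemma d2z_cup_1_1:
  assumes "a \<in> H1 G" "g \<in> carrier G" "h \<in> carrier G"
  shows "d2z G a (cup_1_1 a x y) g h k
    = zadd (cup_2_1 G a (d1z G a x) y g h k) (cup_1_2 a x (d1z G a y) g h k)"
proof -
  have "a (g \<otimes>\<^bsub>G\<^esub> h) = a g + a h"
    using assms by (simp add: H1_def)
  then show ?thesis
    unfolding d2z_def d1z_def cup_1_1_def cup_2_1_def cup_1_2_def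
    by (simp add: z2z2_simps zadd_commute zadd_left_commute zdot_commute)
qed

definition uinv :: "u1u1 \<Rightarrow> u1u1" where
  "uinv p = (inverse (fst p), inverse (snd p))"

lemma neg1_add: "neg1 (x + y) = neg1 x * neg1 y"
  by (cases x; cases y) (simp_all add: neg1_def)

lemma neg1_square: "neg1 x * neg1 x = 1"
  by (cases x) (simp_all add: neg1_def)

lemma sgnp_zadd: "sgnp (zadd x y) = umul (sgnp x) (sgnp y)"
  by (simp only: sgnp_def zadd_def umul_def prod.sel neg1_add)

lemma swp_sgnp: "swp a (sgnp x) = sgnp (swp a x)"
  by (simp add: swp_def sgnp_def)

lemma is_u1_umul: "is_u1 p \<Longrightarrow> is_u1 q \<Longrightarrow> is_u1 (umul p q)"
  by (simp add: is_u1_def umul_def norm_mult)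

lemma is_u1_udiv: "is_u1 p \<Longrightarrow> is_u1 q \<Longrightarrow> is_u1 (udiv p q)"
  by (simp add: is_u1_def udiv_def norm_divide)

lemma is_u1_swp: "is_u1 p \<Longrightarrow> is_u1 (swp a p)"
  by (simp add: is_u1_def swp_def)

lemma is_u1_uinv: "is_u1 p \<Longrightarrow> is_u1 (uinv p)"
  by (simp add: is_u1_def uinv_def norm_inverse)

lemma is_u1_sgnp: "is_u1 (sgnp x)"
  by (simp add: is_u1_def sgnp_def neg1_def)

lemma d2u_umul:
  "d2u G a (\<lambda>x y. umul (s x y) (t x y)) g h k = umul (d2u G a s g h k) (d2u G a t g h k)"
  by (cases "a g")
    (simp_all add: d2u_def umul_def udiv_def swp_def divide_inverse inverse_mult_distrib mult_ac)

lemma d2u_uinv: "d2u G a (\<lambda>x y. uinv (s x y)) g h k = uinv (d2u G a s g h k)"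
  by (cases "a g")
    (simp_all add: d2u_def udiv_def umul_def uinv_def swp_def divide_inverse inverse_mult_distrib mult_ac)

lemma umul_assoc: "umul (umul p q) r = umul p (umul q r)"
  by (simp add: umul_def mult.assoc)

lemma umul_commute: "umul p q = umul q p"
  by (simp add: umul_def mult.commute)

lemma umul_left_commute: "umul p (umul q r) = umul q (umul p r)"
  by (simp add: umul_def mult.left_commute)

lemma udiv_umul: "udiv p (umul q r) = udiv (udiv p q) r"
  by (simp add: udiv_def umul_def)

lemma udiv_sgnp: "udiv p (sgnp x) = umul p (sgnp x)"
  by (cases "fst x"; cases "snd x") (simp_all add: udiv_def umul_def sgnp_def neg1_def)

lemma d2u_sgnp: "d2u G a (\<lambda>x y. sgnp (f x y)) g h k = sgnp (d2z G a f g h k)"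
  unfolding d2u_def d2z_def
  by (simp only: zsub_eq_zadd sgnp_zadd swp_sgnp udiv_umul udiv_sgnp
      umul_assoc umul_commute umul_left_commute)

lemma is_u1_d2u:
  assumes "monoid G" and "\<forall>g\<in>carrier G. \<forall>h\<in>carrier G. is_u1 (\<sigma> g h)"
    and "g \<in> carrier G" "h \<in> carrier G" "k \<in> carrier G"
  shows "is_u1 (d2u G a \<sigma> g h k)"
  unfolding d2u_def using assms
  by (intro is_u1_udiv is_u1_umul is_u1_swp) (simp_all add: monoid.m_closed)

lemma umul_sgnp_inverse:
  assumes "is_u1 d" and "zadd x y = w"
  shows "umul (umul (sgnp x) (umul (uinv d) (sgnp w))) (umul (umul (sgnp y) d) c) = c"
proof -
  have cancel: "s * (inverse e * (s * t)) * (t * e * z) = z"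
    if "s * s = 1" "t * t = 1" "e \<noteq> 0" for s t e z :: complex
  proof -
    have "s * (inverse e * (s * t)) * (t * e * z) = (s * s) * (t * t) * (inverse e * e) * z"
      by (simp add: mult_ac)
    then show ?thesis
      using that by simp
  qed
  have "fst d \<noteq> 0" "snd d \<noteq> 0"
    using assms(1) by (auto simp: is_u1_def)
  then show ?thesis
    unfolding assms(2)[symmetric] sgnp_zadd
    by (simp add: umul_def uinv_def sgnp_def cancel neg1_square)
qed

lemma umul_sgnp_compose:
  assumes "zadd x y = zadd z w"
  shows "umul (umul (sgnp x) d') (umul (umul (sgnp y) d) c)
    = umul (umul (sgnp z) (umul (umul d d') (sgnp w))) c"
proof -
  have "umul (sgnp x) (sgnp y) = umul (sgnp z) (sgnp w)"
    using arg_cong[OF assms, of sgnp] by (simp only: sgnp_zadd)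
  then have "neg1 (fst x) * neg1 (fst y) = neg1 (fst z) * neg1 (fst w)"
    "neg1 (snd x) * neg1 (snd y) = neg1 (snd z) * neg1 (snd w)"
    by (simp_all add: umul_def sgnp_def)
  then show ?thesis
    by (simp add: umul_def sgnp_def)
qed

text \<open>The argument n stands for b' - b - m.\<close>

definition gauge_related ::
  "('g, 'b) monoid_scheme \<Rightarrow> ('g \<Rightarrow> bit)
    \<Rightarrow> ('g \<Rightarrow> 'g \<Rightarrow> 'g \<Rightarrow> u1u1) \<Rightarrow> ('g \<Rightarrow> 'g \<Rightarrow> z2z2) \<Rightarrow> ('g \<Rightarrow> 'g \<Rightarrow> z2z2)
    \<Rightarrow> ('g \<Rightarrow> 'g \<Rightarrow> 'g \<Rightarrow> u1u1) \<Rightarrow> ('g \<Rightarrow> 'g \<Rightarrow> z2z2) \<Rightarrow> ('g \<Rightarrow> 'g \<Rightarrow> z2z2)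
    \<Rightarrow> ('g \<Rightarrow> z2z2) \<Rightarrow> ('g \<Rightarrow> z2z2) \<Rightarrow> ('g \<Rightarrow> 'g \<Rightarrow> u1u1) \<Rightarrow> bool" where
  "gauge_related G a c kR kL c' kR' kL' n m \<sigma> \<longleftrightarrow>
     (\<forall>g\<in>carrier G. \<forall>h\<in>carrier G. is_u1 (\<sigma> g h)) \<and>
     (\<forall>g\<in>carrier G. \<forall>h\<in>carrier G.
        kR' g h = zadd (d1z G a m g h) (kR g h) \<and> kL' g h = zadd (d1z G a n g h) (kL g h)) \<and>
     (\<forall>g\<in>carrier G. \<forall>h\<in>carrier G. \<forall>k\<in>carrier G.
        c' g h k = umul (umul (sgnp (zadd (cup_2_1 G a kL m g h k) (cup_1_2 a n kR' g h k)))
                              (d2u G a \<sigma> g h k)) (c g h k))"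

text \<open>The hypothesis is needed because pd_rel quantifies the kR and kL equations over a
  dummy third argument k as well.\<close>

lemma pd_rel_iff_gauge_related:
  assumes "carrier G \<noteq> {}"
  shows "((c, kR, kL, b, a), (c', kR', kL', b', a')) \<in> pd_rel G \<longleftrightarrow>
     (c, kR, kL, b, a) \<in> PDt G \<and> (c', kR', kL', b', a') \<in> PDt G \<and> (\<forall>g\<in>carrier G. a g = a' g) \<and>
     (\<exists>m \<sigma>. gauge_related G a c kR kL c' kR' kL' (\<lambda>x. zsub (zsub (b' x) (b x)) (m x)) m \<sigma>)"
proof -
  have "d1z G a (\<lambda>x. zsub (zsub (b' x) (b x)) (m x)) g h
      = zsub (zsub (d1z G a b' g h) (d1z G a b g h)) (d1z G a m g h)" for m g h
    by (simp only: zsub_eq_zadd d1z_zadd)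
  moreover have "(\<forall>k\<in>carrier G. P) \<longleftrightarrow> P" for P
    using assms by blast
  ultimately show ?thesis
    unfolding pd_rel_def gauge_related_def cup_2_1_def cup_1_2_def
    by (simp add: sgnp_zadd ball_conj_distrib)
qed

lemma gauge_related_cong:
  assumes "monoid G" and "\<forall>g\<in>carrier G. a g = a' g"
  shows "gauge_related G a c kR kL c' kR' kL' n m \<sigma> = gauge_related G a' c kR kL c' kR' kL' n m \<sigma>"
proof -
  have "a g = a' g" "a (g \<otimes>\<^bsub>G\<^esub> h) = a' (g \<otimes>\<^bsub>G\<^esub> h)"
    if "g \<in> carrier G" "h \<in> carrier G" for g h
    using assms that by (simp_all add: monoid.m_closed)
  then show ?thesis
    unfolding gauge_related_def d1z_def d2u_def cup_2_1_def cup_1_2_def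
    by auto
qed

lemma gauge_related_refl:
  "gauge_related G a c kR kL c kR kL (\<lambda>_. (0, 0)) (\<lambda>_. (0, 0)) (\<lambda>_ _. (1, 1))"
  unfolding gauge_related_def d1z_def d2u_def cup_2_1_def cup_1_2_def
  by (simp add: z2z2_simps zadd_zero_left zdot_zero_left zdot_zero_right
      swp_def sgnp_def neg1_def umul_def udiv_def is_u1_def)

lemma gauge_related_sym:
  assumes "monoid G" and "a \<in> H1 G" and rel: "gauge_related G a c kR kL c' kR' kL' n m \<sigma>"
  shows "gauge_related G a c' kR' kL' c kR kL n m
           (\<lambda>g h. umul (uinv (\<sigma> g h)) (sgnp (cup_1_1 a n m g h)))"
  unfolding gauge_related_def
proof (intro conjI ballI)
  fix g h assume g: "g \<in> carrier G" and h: "h \<in> carrier G"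
  show "is_u1 (umul (uinv (\<sigma> g h)) (sgnp (cup_1_1 a n m g h)))"
    using rel g h by (intro is_u1_umul is_u1_uinv is_u1_sgnp) (simp add: gauge_related_def)
  show "kR g h = zadd (d1z G a m g h) (kR' g h)" "kL g h = zadd (d1z G a n g h) (kL' g h)"
    using rel g h by (simp_all add: gauge_related_def zadd_self_left)
next
  fix g h k assume g: "g \<in> carrier G" and h: "h \<in> carrier G" and k: "k \<in> carrier G"
  have sign: "zadd (zadd (cup_2_1 G a kL' m g h k) (cup_1_2 a n kR g h k))
                   (zadd (cup_2_1 G a kL m g h k) (cup_1_2 a n kR' g h k))
            = d2z G a (cup_1_1 a n m) g h k"
    using rel g h k
    unfolding d2z_cup_1_1[OF \<open>a \<in> H1 G\<close> g h] gauge_related_def cup_2_1_def cup_1_2_def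
    by (simp add: z2z2_simps zadd_commute zadd_left_commute)
  have "is_u1 (d2u G a \<sigma> g h k)"
    using rel g h k by (intro is_u1_d2u[OF \<open>monoid G\<close>]) (simp_all add: gauge_related_def)
  from umul_sgnp_inverse[OF this sign]
  show "c g h k = umul (umul (sgnp (zadd (cup_2_1 G a kL' m g h k) (cup_1_2 a n kR g h k)))
      (d2u G a (\<lambda>g h. umul (uinv (\<sigma> g h)) (sgnp (cup_1_1 a n m g h))) g h k)) (c' g h k)"
    using rel g h k by (simp add: gauge_related_def d2u_umul d2u_uinv d2u_sgnp)
qed

lemma gauge_related_trans:
  assumes "a \<in> H1 G"
    and rel: "gauge_related G a c kR kL c' kR' kL' n m \<sigma>"
    and rel': "gauge_related G a c' kR' kL' c'' kR'' kL'' n' m' \<sigma>'"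
  shows "gauge_related G a c kR kL c'' kR'' kL'' (\<lambda>x. zadd (n x) (n' x)) (\<lambda>x. zadd (m x) (m' x))
           (\<lambda>g h. umul (umul (\<sigma> g h) (\<sigma>' g h)) (sgnp (cup_1_1 a n m' g h)))"
  unfolding gauge_related_def
proof (intro conjI ballI)
  fix g h assume g: "g \<in> carrier G" and h: "h \<in> carrier G"
  show "is_u1 (umul (umul (\<sigma> g h) (\<sigma>' g h)) (sgnp (cup_1_1 a n m' g h)))"
    using rel rel' g h by (intro is_u1_umul is_u1_sgnp) (simp_all add: gauge_related_def)
  show "kR'' g h = zadd (d1z G a (\<lambda>x. zadd (m x) (m' x)) g h) (kR g h)"
    "kL'' g h = zadd (d1z G a (\<lambda>x. zadd (n x) (n' x)) g h) (kL g h)"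
    using rel rel' g h by (simp_all add: gauge_related_def d1z_zadd zadd_assoc zadd_left_commute)
next
  fix g h k assume g: "g \<in> carrier G" and h: "h \<in> carrier G" and k: "k \<in> carrier G"
  have sign: "zadd (zadd (cup_2_1 G a kL' m' g h k) (cup_1_2 a n' kR'' g h k))
                   (zadd (cup_2_1 G a kL m g h k) (cup_1_2 a n kR' g h k))
            = zadd (zadd (cup_2_1 G a kL (\<lambda>x. zadd (m x) (m' x)) g h k)
                         (cup_1_2 a (\<lambda>x. zadd (n x) (n' x)) kR'' g h k))
                   (d2z G a (cup_1_1 a n m') g h k)"
    using rel rel' g h k
    unfolding d2z_cup_1_1[OF \<open>a \<in> H1 G\<close> g h] gauge_related_def cup_2_1_def cup_1_2_def
    by (simp add: z2z2_simps zadd_commute zadd_left_commute)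
  from umul_sgnp_compose[OF sign]
  show "c'' g h k = umul (umul (sgnp (zadd (cup_2_1 G a kL (\<lambda>x. zadd (m x) (m' x)) g h k)
                                          (cup_1_2 a (\<lambda>x. zadd (n x) (n' x)) kR'' g h k)))
      (d2u G a (\<lambda>g h. umul (umul (\<sigma> g h) (\<sigma>' g h)) (sgnp (cup_1_1 a n m' g h))) g h k)) (c g h k)"
    using rel rel' g h k by (simp add: gauge_related_def d2u_umul d2u_sgnp)
qed

lemma pd_rel_refl:
  assumes "carrier G \<noteq> {}" and "(c, kR, kL, b, a) \<in> PDt G"
  shows "((c, kR, kL, b, a), (c, kR, kL, b, a)) \<in> pd_rel G"
proof -
  have "(\<lambda>x. zsub (zsub (b x) (b x)) (0, 0)) = (\<lambda>_. (0, 0))"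
    by (simp add: z2z2_simps)
  then have "gauge_related G a c kR kL c kR kL (\<lambda>x. zsub (zsub (b x) (b x)) (0, 0))
               (\<lambda>_. (0, 0)) (\<lambda>_ _. (1, 1))"
    using gauge_related_refl by simp
  then show ?thesis
    unfolding pd_rel_iff_gauge_related[OF assms(1)] using assms(2)
    by (auto intro!: exI[of _ "\<lambda>_. (0, 0)"])
qed

lemma pd_rel_sym:
  assumes "monoid G" and "((c, kR, kL, b, a), (c', kR', kL', b', a')) \<in> pd_rel G"
  shows "((c', kR', kL', b', a'), (c, kR, kL, b, a)) \<in> pd_rel G"
proof -
  have nonempty: "carrier G \<noteq> {}"
    using monoid.one_closed[OF assms(1)] by blast
  from assms(2) obtain m \<sigma> where
    pentads: "(c, kR, kL, b, a) \<in> PDt G" "(c', kR', kL', b', a') \<in> PDt G"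
    and a_eq: "\<forall>g\<in>carrier G. a g = a' g"
    and rel: "gauge_related G a c kR kL c' kR' kL' (\<lambda>x. zsub (zsub (b' x) (b x)) (m x)) m \<sigma>"
    unfolding pd_rel_iff_gauge_related[OF nonempty] by blast
  have "a \<in> H1 G"
    using pentads(1) by (simp add: PDt_def)
  have n_sym: "(\<lambda>x. zsub (zsub (b' x) (b x)) (m x)) = (\<lambda>x. zsub (zsub (b x) (b' x)) (m x))"
    by (simp add: zsub_eq_zadd zadd_commute)
  from gauge_related_sym[OF assms(1) \<open>a \<in> H1 G\<close> rel]
  show ?thesis
    unfolding pd_rel_iff_gauge_related[OF nonempty] n_sym gauge_related_cong[OF assms(1) a_eq]
    using pentads a_eq by auto
qed

lemma pd_rel_trans:
  assumes "monoid G"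
    and "((c, kR, kL, b, a), (c', kR', kL', b', a')) \<in> pd_rel G"
    and "((c', kR', kL', b', a'), (c'', kR'', kL'', b'', a'')) \<in> pd_rel G"
  shows "((c, kR, kL, b, a), (c'', kR'', kL'', b'', a'')) \<in> pd_rel G"
proof -
  have nonempty: "carrier G \<noteq> {}"
    using monoid.one_closed[OF assms(1)] by blast
  from assms(2) obtain m \<sigma> where
    pentads: "(c, kR, kL, b, a) \<in> PDt G"
    and a_eq: "\<forall>g\<in>carrier G. a g = a' g"
    and rel: "gauge_related G a c kR kL c' kR' kL' (\<lambda>x. zsub (zsub (b' x) (b x)) (m x)) m \<sigma>"
    unfolding pd_rel_iff_gauge_related[OF nonempty] by blast
  from assms(3) obtain m' \<sigma>' where
    pentads': "(c'', kR'', kL'', b'', a'') \<in> PDt G"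
    and a_eq': "\<forall>g\<in>carrier G. a' g = a'' g"
    and rel': "gauge_related G a' c' kR' kL' c'' kR'' kL''
                 (\<lambda>x. zsub (zsub (b'' x) (b' x)) (m' x)) m' \<sigma>'"
    unfolding pd_rel_iff_gauge_related[OF nonempty] by blast
  have "a \<in> H1 G"
    using pentads by (simp add: PDt_def)
  have n_trans: "(\<lambda>x. zsub (zsub (b'' x) (b x)) (zadd (m x) (m' x)))
      = (\<lambda>x. zadd (zsub (zsub (b' x) (b x)) (m x)) (zsub (zsub (b'' x) (b' x)) (m' x)))"
    by (simp add: z2z2_simps zadd_commute zadd_left_commute)
  have "gauge_related G a c' kR' kL' c'' kR'' kL''
          (\<lambda>x. zsub (zsub (b'' x) (b' x)) (m' x)) m' \<sigma>'"
    using rel' gauge_related_cong[OF assms(1) a_eq] by simp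
  from gauge_related_trans[OF \<open>a \<in> H1 G\<close> rel this]
  have "gauge_related G a c kR kL c'' kR'' kL''
          (\<lambda>x. zsub (zsub (b'' x) (b x)) (zadd (m x) (m' x))) (\<lambda>x. zadd (m x) (m' x))
          (\<lambda>g h. umul (umul (\<sigma> g h) (\<sigma>' g h))
             (sgnp (cup_1_1 a (\<lambda>x. zsub (zsub (b' x) (b x)) (m x)) m' g h)))"
    unfolding n_trans .
  moreover have "\<forall>g\<in>carrier G. a g = a'' g"
    using a_eq a_eq' by simp
  ultimately show ?thesis
    unfolding pd_rel_iff_gauge_related[OF nonempty] using pentads pentads'
    by (auto intro!: exI[of _ "\<lambda>x. zadd (m x) (m' x)"])
qed

theorem lemma2p2:
  fixes G :: "('g, 'b) monoid_scheme"
  assumes "group G" and "finite (carrier G)"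
  shows "equiv (PDt G) (pd_rel G)"
proof (rule equivI)
  have "monoid G"
    using assms(1) by (rule group.is_monoid)
  then have nonempty: "carrier G \<noteq> {}"
    using monoid.one_closed by blast
  show "pd_rel G \<subseteq> PDt G \<times> PDt G"
    by (auto simp: pd_rel_def)
  show "refl_on (PDt G) (pd_rel G)"
    by (rule refl_onI) (auto intro: pd_rel_refl[OF nonempty])
  show "sym (pd_rel G)"
    by (rule symI) (auto intro: pd_rel_sym[OF \<open>monoid G\<close>])
  show "trans (pd_rel G)"
    by (rule transI) (auto intro: pd_rel_trans[OF \<open>monoid G\<close>])
qed

end
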